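(* Let $\mathcal M$ be a finite polyptych lattice over $F$, $(\mathcal M,\mathcal N,\mathsf v,\mathsf w)$ a strict dual $F$-pair, and $\mathcal P\subseteq\mathcal M_{\mathbb R}$ a PL polytope over $F$. Then the support function satisfies $\psi_{\mathcal P}(n)=\min_{s\in V(\mathcal P)}\mathsf v(s)(n)$ for all $n\in\mathcal N_{\mathbb R}$, where $V(\mathcal P)$ is a finite set. In particular $\psi_{\mathcal P}$ is continuous and belongs to the point semialgebra $P_{\mathcal N_{\mathbb R}}$.
   Context: Fix a subring $F$ with $\mathbb Z\subseteq F\subseteq\mathbb R$. A polyptych lattice of rank $r$ over $F$ is a collection $\{M_\alpha\}_{\alpha\in I}$ of free $F$-modules of rank $r$ with piecewise $F$-linear maps (continuous and $F$-linear on each cone of some complete $F$-rational fan) $\mu_{\alpha,\beta}:M_\alpha\to M_\beta$ with $\mu_{\alpha,\alpha}=\mathrm{id}$, $\mu_{\alpha,\beta}=\mu_{\beta,\alpha}^{-1}$, $\mu_{\beta,\gamma}\circ\mu_{\alpha,\beta}=\mu_{\alpha,\gamma}$; finite if $I$ is finite. Elements are classes of $\bigsqcup M_\alpha$ under $m_\alpha\sim\mu_{\alpha,\beta}(m_\alpha)$; $\pi_\alpha$ chart maps; $\mathcal M_{\mathbb R}$ has charts $M_\alpha\otimes\mathbb R$. $m+_\alpha m':=\pi_\alpha^{-1}(\pi_\alpha(m)+\pi_\alpha(m'))$, $\lambda m:=\pi_\alpha^{-1}(\lambda\pi_\alpha(m))$. $\Sigma(\mathcal M)$: coarsest complete fan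 of cones in $\mathcal M_{\mathbb R}$ on whose chart images all mutations are linear. Points of $\mathcal M$ (resp. $\mathcal M_{\mathbb R}$): $p$ with $p(m)+p(m')=\min_\alpha p(m+_\alpha m')$ and $p(\lambda m)=\lambda p(m)$ for nonnegative scalars; sets $\mathrm{Sp}(\mathcal M)$, $\mathrm{Sp}_{\mathbb R}(\mathcal M)$; $\mathrm{Sp}_{\mathbb R}(\mathcal M,\alpha)$ = those linear on chart $\alpha$. $\mathcal H_{p,a}=\{m\in\mathcal M_{\mathbb R}:p(m)\ge a\}$. A PL polytope over $F$: compact $\bigcap_{i=1}^\ell\mathcal H_{p_i,a_i}$, $p_i\in\mathrm{Sp}(\mathcal M)$, $a_i\in F$; $V(\mathcal P)=\{m:\exists\alpha,\ \pi_\alpha(m)\text{ a vertex of the polytope }\pi_\alpha(\mathcal P)\}$. Strict dual $F$-pair: $\mathsf v:\mathcal M_{\mathbb R}\to\mathrm{Sp}_{\mathbb R}(\mathcal N)$, $\mathsf w:\mathcal N_{\mathbb R}\to\mathrm{Sp}_{\mathbb R}(\mathcal M)$ such that (1) $\mathsf v(\mathcal M)\subseteq\mathrm{Sp}(\mathcal N)$, $\mathsf w(\mathcal N)\subseteq\mathrm{Sp}(\mathcal M)$; (2) $\mathsf v(m)(n)=\mathsf w(n)(m)$; (3) these restrictions are bijections; (4) the $\mathsf v^{-1}(\mathrm{Sp}_{\mathbb R}(\mathcal N,\gamma))$ are exactly the maximal cones of $\Sigma(\mathcal M)$ and the $\mathsf w^{-1}(\mathrm{Sp}_{\mathbb R}(\mathcal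 M,\alpha))$ those of $\Sigma(\mathcal N)$. Support function: $\psi_{\mathcal P}(n)=\min\{\mathsf v(u)(n):u\in\mathcal P\}$ for $n\in\mathcal N_{\mathbb R}$. $P_{\mathcal N_{\mathbb R}}$ is the set of functions on $\mathcal N_{\mathbb R}$ generated by $\mathrm{Sp}_{\mathbb R}(\mathcal N)$ under pointwise $\min$ and $+$. *)

theory Defs
  imports "HOL-Analysis.Analysis" "HOL-Library.FuncSet"
begin

definition subring_F :: "real set \<Rightarrow> bool" where
  "subring_F F \<longleftrightarrow> \<int> \<subseteq> F \<and> (\<forall>x\<in>F. \<forall>y\<in>F. x + y \<in> F \<and> x * y \<in> F \<and> - x \<in> F)"

text \<open>The free F-module of rank r, realised as the F-points of real^'r.\<close>
definition Fvecs :: "real set \<Rightarrow> (real^'n) set" where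
  "Fvecs F = {x. \<forall>i. x $ i \<in> F}"

definition fincone :: "(real^'n) set \<Rightarrow> (real^'n) set" where
  "fincone S = {y. \<exists>c. (\<forall>u\<in>S. 0 \<le> c u) \<and> y = (\<Sum>u\<in>S. c u *\<^sub>R u)}"

text \<open>Polyhedral cone generated by finitely many vectors with coordinates in F
  (F = UNIV gives arbitrary real polyhedral cones).\<close>
definition polyhedral_cone_F :: "real set \<Rightarrow> (real^'n) set \<Rightarrow> bool" where
  "polyhedral_cone_F F C \<longleftrightarrow> (\<exists>S. finite S \<and> S \<subseteq> Fvecs F \<and> C = fincone S)"

definition complete_fan :: "((real^'n) set \<Rightarrow> bool) \<Rightarrow> (real^'n) set set \<Rightarrow> bool" where
  "complete_fan cone_ok \<Sigma> \<longleftrightarrow> finite \<Sigma> \<and> (\<forall>C\<in>\<Sigma>. cone_ok C)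
     \<and> (\<forall>C\<in>\<Sigma>. \<forall>D. D face_of C \<and> D \<noteq> {} \<longrightarrow> D \<in> \<Sigma>)
     \<and> (\<forall>C\<in>\<Sigma>. \<forall>D\<in>\<Sigma>. (C \<inter> D) face_of C \<and> (C \<inter> D) face_of D)
     \<and> \<Union>\<Sigma> = UNIV"

definition F_linear :: "real set \<Rightarrow> (real^'n \<Rightarrow> real^'n) \<Rightarrow> bool" where
  "F_linear F L \<longleftrightarrow> linear L \<and> L ` Fvecs F \<subseteq> Fvecs F"

definition PL_F :: "real set \<Rightarrow> (real^'n \<Rightarrow> real^'n) \<Rightarrow> bool" where
  "PL_F F f \<longleftrightarrow> continuous_on UNIV f \<and>
     (\<exists>\<Sigma>. complete_fan (polyhedral_cone_F F) \<Sigma> \<and>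
          (\<forall>C\<in>\<Sigma>. \<exists>L. F_linear F L \<and> (\<forall>x\<in>C. f x = L x)))"

text \<open>Charts indexed by the type 'i; \<mu> \<alpha> \<beta> is the mutation from chart \<alpha> to chart \<beta>
  (extended to the real charts M_\<alpha> \<otimes> R).\<close>
definition polyptych :: "real set \<Rightarrow> ('i \<Rightarrow> 'i \<Rightarrow> real^'n \<Rightarrow> real^'n) \<Rightarrow> bool" where
  "polyptych F \<mu> \<longleftrightarrow> subring_F F \<and> (\<forall>\<alpha> \<beta>. PL_F F (\<mu> \<alpha> \<beta>))
     \<and> (\<forall>\<alpha>. \<mu> \<alpha> \<alpha> = id)
     \<and> (\<forall>\<alpha> \<beta>. \<mu> \<alpha> \<beta> = inv (\<mu> \<beta> \<alpha>))
     \<and> (\<forall>\<alpha> \<beta> \<gamma>. \<mu> \<beta> \<gamma> \<circ> \<mu> \<alpha> \<beta> = \<mu> \<alpha> \<gamma>)"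

text \<open>Elements of M_R: equivalence classes, represented by the family of their
  chart representatives (m \<alpha> = \<pi>_\<alpha>(m)).\<close>
definition MR :: "('i \<Rightarrow> 'i \<Rightarrow> real^'n \<Rightarrow> real^'n) \<Rightarrow> ('i \<Rightarrow> real^'n) set" where
  "MR \<mu> = {m. \<forall>\<alpha> \<beta>. m \<beta> = \<mu> \<alpha> \<beta> (m \<alpha>)}"

definition Mpts :: "real set \<Rightarrow> ('i \<Rightarrow> 'i \<Rightarrow> real^'n \<Rightarrow> real^'n) \<Rightarrow> ('i \<Rightarrow> real^'n) set" where
  "Mpts F \<mu> = {m \<in> MR \<mu>. \<forall>\<alpha>. m \<alpha> \<in> Fvecs F}"

definition chart_inv :: "('i \<Rightarrow> 'i \<Rightarrow> real^'n \<Rightarrow> real^'n) \<Rightarrow> 'i \<Rightarrow> real^'n \<Rightarrow> ('i \<Rightarrow> real^'n)" where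
  "chart_inv \<mu> \<alpha> x = (\<lambda>\<beta>. \<mu> \<alpha> \<beta> x)"

definition addc :: "('i \<Rightarrow> 'i \<Rightarrow> real^'n \<Rightarrow> real^'n) \<Rightarrow> 'i \<Rightarrow> ('i \<Rightarrow> real^'n) \<Rightarrow> ('i \<Rightarrow> real^'n) \<Rightarrow> ('i \<Rightarrow> real^'n)" where
  "addc \<mu> \<alpha> m m' = chart_inv \<mu> \<alpha> (m \<alpha> + m' \<alpha>)"

definition smulc :: "('i \<Rightarrow> 'i \<Rightarrow> real^'n \<Rightarrow> real^'n) \<Rightarrow> 'i \<Rightarrow> real \<Rightarrow> ('i \<Rightarrow> real^'n) \<Rightarrow> ('i \<Rightarrow> real^'n)" where
  "smulc \<mu> \<alpha> c m = chart_inv \<mu> \<alpha> (c *\<^sub>R m \<alpha>)"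

text \<open>Points of M_R (functions on M_R, extensional outside M_R).  The minimum over
  charts is expressed as: a lower bound that is attained.\<close>
definition SpR :: "('i \<Rightarrow> 'i \<Rightarrow> real^'n \<Rightarrow> real^'n) \<Rightarrow> (('i \<Rightarrow> real^'n) \<Rightarrow> real) set" where
  "SpR \<mu> = {p. p \<in> extensional (MR \<mu>)
     \<and> (\<forall>m\<in>MR \<mu>. \<forall>m'\<in>MR \<mu>.
           (\<forall>\<alpha>. p m + p m' \<le> p (addc \<mu> \<alpha> m m')) \<and> (\<exists>\<alpha>. p m + p m' = p (addc \<mu> \<alpha> m m')))
     \<and> (\<forall>m\<in>MR \<mu>. \<forall>c::real. c \<ge> 0 \<longrightarrow> (\<forall>\<alpha>. p (smulc \<mu> \<alpha> c m) = c * p m))}"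

definition Sp :: "real set \<Rightarrow> ('i \<Rightarrow> 'i \<Rightarrow> real^'n \<Rightarrow> real^'n) \<Rightarrow> (('i \<Rightarrow> real^'n) \<Rightarrow> real) set" where
  "Sp F \<mu> = {p \<in> SpR \<mu>. \<forall>m\<in>Mpts F \<mu>. p m \<in> F}"

definition SpR_chart :: "('i \<Rightarrow> 'i \<Rightarrow> real^'n \<Rightarrow> real^'n) \<Rightarrow> 'i \<Rightarrow> (('i \<Rightarrow> real^'n) \<Rightarrow> real) set" where
  "SpR_chart \<mu> \<alpha> = {p \<in> SpR \<mu>. linear (\<lambda>x. p (chart_inv \<mu> \<alpha> x))}"

definition fan_of_PL :: "('i \<Rightarrow> 'i \<Rightarrow> real^'n \<Rightarrow> real^'n) \<Rightarrow> ('i \<Rightarrow> real^'n) set set \<Rightarrow> bool" where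
  "fan_of_PL \<mu> \<Sigma> \<longleftrightarrow> (\<forall>C\<in>\<Sigma>. C \<subseteq> MR \<mu>)
     \<and> (\<forall>\<alpha>. complete_fan (polyhedral_cone_F UNIV) ((\<lambda>C. (\<lambda>m. m \<alpha>) ` C) ` \<Sigma>))
     \<and> (\<forall>C\<in>\<Sigma>. \<forall>\<alpha> \<beta>. \<exists>L. linear L \<and> (\<forall>m\<in>C. m \<beta> = L (m \<alpha>)))"

definition is_Sigma :: "('i \<Rightarrow> 'i \<Rightarrow> real^'n \<Rightarrow> real^'n) \<Rightarrow> ('i \<Rightarrow> real^'n) set set \<Rightarrow> bool" where
  "is_Sigma \<mu> \<Sigma> \<longleftrightarrow> fan_of_PL \<mu> \<Sigma> \<and>
     (\<forall>\<Sigma>'. fan_of_PL \<mu> \<Sigma>' \<longrightarrow> (\<forall>C'\<in>\<Sigma>'. \<exists>C\<in>\<Sigma>. C' \<subseteq> C))"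

definition maxcones :: "'a set set \<Rightarrow> 'a set set" where
  "maxcones \<Sigma> = {C \<in> \<Sigma>. \<not> (\<exists>D\<in>\<Sigma>. C \<subset> D)}"

definition strict_dual_pair ::
  "real set \<Rightarrow> ('i \<Rightarrow> 'i \<Rightarrow> real^'n \<Rightarrow> real^'n) \<Rightarrow> ('j \<Rightarrow> 'j \<Rightarrow> real^'k \<Rightarrow> real^'k)
   \<Rightarrow> (('i \<Rightarrow> real^'n) \<Rightarrow> ('j \<Rightarrow> real^'k) \<Rightarrow> real) \<Rightarrow> (('j \<Rightarrow> real^'k) \<Rightarrow> ('i \<Rightarrow> real^'n) \<Rightarrow> real) \<Rightarrow> bool" where
  "strict_dual_pair F \<mu> \<nu> v w \<longleftrightarrow>
     (\<forall>m\<in>MR \<mu>. v m \<in> SpR \<nu>) \<and> (\<forall>n\<in>MR \<nu>. w n \<in> SpR \<mu>)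
   \<and> v ` Mpts F \<mu> \<subseteq> Sp F \<nu> \<and> w ` Mpts F \<nu> \<subseteq> Sp F \<mu>
   \<and> (\<forall>m\<in>MR \<mu>. \<forall>n\<in>MR \<nu>. v m n = w n m)
   \<and> bij_betw v (Mpts F \<mu>) (Sp F \<nu>) \<and> bij_betw w (Mpts F \<nu>) (Sp F \<mu>)
   \<and> (\<exists>\<Sigma>. is_Sigma \<mu> \<Sigma> \<and> maxcones \<Sigma> = range (\<lambda>\<gamma>. {m \<in> MR \<mu>. v m \<in> SpR_chart \<nu> \<gamma>}))
   \<and> (\<exists>\<Sigma>. is_Sigma \<nu> \<Sigma> \<and> maxcones \<Sigma> = range (\<lambda>\<alpha>. {n \<in> MR \<nu>. w n \<in> SpR_chart \<mu> \<alpha>}))"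

definition halfspace :: "('i \<Rightarrow> 'i \<Rightarrow> real^'n \<Rightarrow> real^'n) \<Rightarrow> (('i \<Rightarrow> real^'n) \<Rightarrow> real) \<Rightarrow> real \<Rightarrow> ('i \<Rightarrow> real^'n) set" where
  "halfspace \<mu> p a = {m \<in> MR \<mu>. p m \<ge> a}"

definition PL_polytope :: "real set \<Rightarrow> ('i \<Rightarrow> 'i \<Rightarrow> real^'n \<Rightarrow> real^'n) \<Rightarrow> ('i \<Rightarrow> real^'n) set \<Rightarrow> bool" where
  "PL_polytope F \<mu> P \<longleftrightarrow>
     (\<exists>pa :: ((('i \<Rightarrow> real^'n) \<Rightarrow> real) \<times> real) list.
         (\<forall>(p, a) \<in> set pa. p \<in> Sp F \<mu> \<and> a \<in> F)
       \<and> P = MR \<mu> \<inter> (\<Inter>(p, a) \<in> set pa. halfspace \<mu> p a))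
   \<and> (\<forall>\<alpha>. compact ((\<lambda>m. m \<alpha>) ` P))"

definition vertices :: "('i \<Rightarrow> 'i \<Rightarrow> real^'n \<Rightarrow> real^'n) \<Rightarrow> ('i \<Rightarrow> real^'n) set \<Rightarrow> ('i \<Rightarrow> real^'n) set" where
  "vertices \<mu> P = {m \<in> MR \<mu>. \<exists>\<alpha>. (m \<alpha>) extreme_point_of ((\<lambda>u. u \<alpha>) ` P)}"

definition support_fn :: "(('i \<Rightarrow> real^'n) \<Rightarrow> ('j \<Rightarrow> real^'k) \<Rightarrow> real) \<Rightarrow> ('i \<Rightarrow> real^'n) set \<Rightarrow> ('j \<Rightarrow> real^'k) \<Rightarrow> real" where
  "support_fn v P n = Inf ((\<lambda>u. v u n) ` P)"

inductive_set Psemi :: "('j \<Rightarrow> 'j \<Rightarrow> real^'k \<Rightarrow> real^'k) \<Rightarrow> (('j \<Rightarrow> real^'k) \<Rightarrow> real) set"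
  for \<nu> where
  gen: "p \<in> SpR \<nu> \<Longrightarrow> p \<in> Psemi \<nu>"
| min: "f \<in> Psemi \<nu> \<Longrightarrow> g \<in> Psemi \<nu> \<Longrightarrow> (\<lambda>n. min (f n) (g n)) \<in> Psemi \<nu>"
| add: "f \<in> Psemi \<nu> \<Longrightarrow> g \<in> Psemi \<nu> \<Longrightarrow> (\<lambda>n. f n + g n) \<in> Psemi \<nu>"

end

theory Submission
  imports Defs
begin

text \<open>In a chart \<alpha>, the image of P is cut out by superlevel sets of finitely many points of M.
  Points are concave on every chart, so this image is convex. A point of M is w(n) for some n in N,
  hence linear on some chart, and so piecewise linear on every chart after composing with a
  mutation; thus the image is a finite union of polyhedra and has finitely many extreme points.
  Being compact, it is their convex hull. Finally, for n in N_R the function v(-)(n) = w(n) is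
  linear on some chart \<alpha>, because the maximal cones of \<Sigma>(N) cover N_R; so its minimum over P is
  attained at an extreme point of the \<alpha>-image, i.e. at a vertex.\<close>

lemma polyptych_mutation_comp: "polyptych F \<mu> \<Longrightarrow> \<mu> \<beta> \<gamma> (\<mu> \<alpha> \<beta> x) = \<mu> \<alpha> \<gamma> x"
  unfolding polyptych_def by (metis comp_apply)

lemma polyptych_mutation_id: "polyptych F \<mu> \<Longrightarrow> \<mu> \<alpha> \<alpha> x = x"
  unfolding polyptych_def by simp

lemma chart_inv_in_MR: "polyptych F \<mu> \<Longrightarrow> chart_inv \<mu> \<alpha> x \<in> MR \<mu>"
  unfolding MR_def chart_inv_def by (simp add: polyptych_mutation_comp)

lemma chart_inv_apply: "polyptych F \<mu> \<Longrightarrow> chart_inv \<mu> \<alpha> x \<alpha> = x"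
  unfolding chart_inv_def by (simp add: polyptych_mutation_id)

lemma chart_inv_mutation: "polyptych F \<mu> \<Longrightarrow> chart_inv \<mu> \<alpha> (\<mu> \<beta> \<alpha> x) = chart_inv \<mu> \<beta> x"
  unfolding chart_inv_def by (simp add: polyptych_mutation_comp)

lemma chart_inv_coordinate: "m \<in> MR \<mu> \<Longrightarrow> chart_inv \<mu> \<alpha> (m \<alpha>) = m"
  unfolding MR_def chart_inv_def by auto

lemma inj_on_coordinate_MR: "inj_on (\<lambda>m. m \<alpha>) (MR \<mu>)"
  by (metis (mono_tags, lifting) chart_inv_coordinate inj_onI)

section \<open>Points are concave on charts\<close>

lemma SpR_chart_superadditive:
  assumes "polyptych F \<mu>" "p \<in> SpR \<mu>"
  shows "p (chart_inv \<mu> \<alpha> x) + p (chart_inv \<mu> \<alpha> y) \<le> p (chart_inv \<mu> \<alpha> (x + y))"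
proof -
  have "addc \<mu> \<alpha> (chart_inv \<mu> \<alpha> x) (chart_inv \<mu> \<alpha> y) = chart_inv \<mu> \<alpha> (x + y)"
    unfolding addc_def using assms(1) by (simp add: chart_inv_apply)
  moreover have "\<forall>m\<in>MR \<mu>. \<forall>m'\<in>MR \<mu>. \<forall>\<alpha>. p m + p m' \<le> p (addc \<mu> \<alpha> m m')"
    using assms(2) unfolding SpR_def by blast
  ultimately show ?thesis using chart_inv_in_MR[OF assms(1)] by metis
qed

lemma SpR_chart_pos_homogeneous:
  assumes "polyptych F \<mu>" "p \<in> SpR \<mu>" "c \<ge> 0"
  shows "p (chart_inv \<mu> \<alpha> (c *\<^sub>R x)) = c * p (chart_inv \<mu> \<alpha> x)"
proof -
  have "smulc \<mu> \<alpha> c (chart_inv \<mu> \<alpha> x) = chart_inv \<mu> \<alpha> (c *\<^sub>R x)"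
    unfolding smulc_def using assms(1) by (simp add: chart_inv_apply)
  moreover have "\<forall>m\<in>MR \<mu>. \<forall>c::real. c \<ge> 0 \<longrightarrow> (\<forall>\<alpha>. p (smulc \<mu> \<alpha> c m) = c * p m)"
    using assms(2) unfolding SpR_def by blast
  ultimately show ?thesis using chart_inv_in_MR[OF assms(1)] assms(3) by metis
qed

lemma SpR_chart_concave:
  assumes "polyptych F \<mu>" "p \<in> SpR \<mu>"
  shows "concave_on UNIV (\<lambda>x. p (chart_inv \<mu> \<alpha> x))"
  unfolding concave_on_iff
proof (intro conjI ballI allI impI convex_UNIV)
  fix x y and u v :: real
  assume "0 \<le> u" "0 \<le> v" "u + v = 1"
  then show "u * p (chart_inv \<mu> \<alpha> x) + v * p (chart_inv \<mu> \<alpha> y)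
      \<le> p (chart_inv \<mu> \<alpha> (u *\<^sub>R x + v *\<^sub>R y))"
    using SpR_chart_superadditive[OF assms, of \<alpha> "u *\<^sub>R x" "v *\<^sub>R y"]
      SpR_chart_pos_homogeneous[OF assms, of u \<alpha> x] SpR_chart_pos_homogeneous[OF assms, of v \<alpha> y]
    by simp
qed

lemma SpR_chart_continuous:
  assumes "polyptych F \<mu>" "p \<in> SpR \<mu>"
  shows "continuous_on UNIV (\<lambda>x. p (chart_inv \<mu> \<alpha> x))"
proof -
  have "continuous_on UNIV (\<lambda>x. - p (chart_inv \<mu> \<alpha> x))"
    using SpR_chart_concave[OF assms] by (intro convex_on_continuous) (auto simp: concave_on_def)
  then show ?thesis
    using continuous_on_minus by fastforce
qed

lemma convex_superlevel_concave_on: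
  assumes "concave_on S f"
  shows "convex {x \<in> S. a \<le> f x}"
proof (rule convexI)
  fix x y and u v :: real
  assume x: "x \<in> {x \<in> S. a \<le> f x}" and y: "y \<in> {x \<in> S. a \<le> f x}"
    and uv: "0 \<le> u" "0 \<le> v" "u + v = 1"
  have "a = u * a + v * a"
    using uv(3) by (simp flip: distrib_right)
  also have "\<dots> \<le> u * f x + v * f y"
    using x y uv by (intro add_mono mult_left_mono) auto
  also have "\<dots> \<le> f (u *\<^sub>R x + v *\<^sub>R y)"
    using assms x y uv by (auto simp: concave_on_iff)
  moreover have "u *\<^sub>R x + v *\<^sub>R y \<in> S"
    using concave_on_imp_convex[OF assms] x y uv by (auto intro: convexD)
  ultimately show "u *\<^sub>R x + v *\<^sub>R y \<in> {x \<in> S. a \<le> f x}"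
    by simp
qed

lemma complete_fan_finite: "complete_fan ok \<Sigma> \<Longrightarrow> finite \<Sigma>"
  unfolding complete_fan_def by (elim conjE)

lemma complete_fan_covers: "complete_fan ok \<Sigma> \<Longrightarrow> \<Union>\<Sigma> = UNIV"
  unfolding complete_fan_def by (elim conjE)

lemma complete_fan_cones: "complete_fan ok \<Sigma> \<Longrightarrow> C \<in> \<Sigma> \<Longrightarrow> ok C"
  unfolding complete_fan_def by (elim conjE) (erule bspec)

lemma fan_of_PL_subset_MR: "fan_of_PL \<mu> \<Sigma> \<Longrightarrow> C \<in> \<Sigma> \<Longrightarrow> C \<subseteq> MR \<mu>"
  unfolding fan_of_PL_def by (elim conjE) (erule bspec)

lemma fan_of_PL_chart_fan:
  "fan_of_PL \<mu> \<Sigma> \<Longrightarrow> complete_fan (polyhedral_cone_F UNIV) ((\<lambda>C. (\<lambda>m. m \<alpha>) ` C) ` \<Sigma>)"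
  unfolding fan_of_PL_def by (elim conjE) (erule allE)

lemma fan_of_PL_finite:
  assumes "fan_of_PL \<mu> \<Sigma>"
  shows "finite \<Sigma>"
proof -
  fix \<alpha>
  have "inj_on (\<lambda>C. (\<lambda>m. m \<alpha>) ` C) \<Sigma>"
  proof (rule inj_onI)
    fix C D assume "C \<in> \<Sigma>" "D \<in> \<Sigma>" "(\<lambda>m. m \<alpha>) ` C = (\<lambda>m. m \<alpha>) ` D"
    then show "C = D"
      using inj_on_image_eq_iff[OF inj_on_coordinate_MR[of \<alpha> \<mu>] fan_of_PL_subset_MR[OF assms]
          fan_of_PL_subset_MR[OF assms]]
      by blast
  qed
  then show ?thesis
    using finite_imageD[OF complete_fan_finite[OF fan_of_PL_chart_fan[OF assms]]] by blast
qed

lemma fan_of_PL_covers: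
  assumes "fan_of_PL \<mu> \<Sigma>" "n \<in> MR \<mu>"
  obtains C where "C \<in> \<Sigma>" "n \<in> C"
proof -
  fix \<alpha>
  have "n \<alpha> \<in> \<Union>((\<lambda>C. (\<lambda>m. m \<alpha>) ` C) ` \<Sigma>)"
    using complete_fan_covers[OF fan_of_PL_chart_fan[OF assms(1)]] by simp
  then obtain C where C: "C \<in> \<Sigma>" "n \<alpha> \<in> (\<lambda>m. m \<alpha>) ` C"
    by (rule UN_E)
  obtain m where m: "m \<in> C" "n \<alpha> = m \<alpha>"
    using C(2) by (rule imageE)
  have "m = n"
    using inj_onD[OF inj_on_coordinate_MR m(2)[symmetric]
        subsetD[OF fan_of_PL_subset_MR[OF assms(1) C(1)] m(1)] assms(2)] .
  with C m that show ?thesis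
    by blast
qed

lemma maxcones_cover:
  assumes "finite \<Sigma>" "C \<in> \<Sigma>"
  shows "\<exists>D\<in>maxcones \<Sigma>. C \<subseteq> D"
proof -
  obtain D where "D \<in> \<Sigma>" "C \<subseteq> D" "\<And>E. E \<in> \<Sigma> \<Longrightarrow> D \<subseteq> E \<Longrightarrow> D = E"
    using finite_has_maximal2[OF assms] by blast
  then show ?thesis
    unfolding maxcones_def by blast
qed

lemma strict_dual_pairD:
  assumes "strict_dual_pair F \<mu> \<nu> v w"
  shows "\<forall>m\<in>MR \<mu>. v m \<in> SpR \<nu>"
    and "\<forall>m\<in>MR \<mu>. \<forall>n\<in>MR \<nu>. v m n = w n m"
    and "bij_betw w (Mpts F \<nu>) (Sp F \<mu>)"
    and "\<exists>\<Sigma>. is_Sigma \<nu> \<Sigma> \<and> maxcones \<Sigma> = range (\<lambda>\<alpha>. {n \<in> MR \<nu>. w n \<in> SpR_chart \<mu> \<alpha>})"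
  using assms unfolding strict_dual_pair_def by - (elim conjE, assumption)+

lemma strict_dual_pair_linear_on_chart:
  assumes "strict_dual_pair F \<mu> \<nu> v w" "n \<in> MR \<nu>"
  obtains \<alpha> where "w n \<in> SpR_chart \<mu> \<alpha>"
proof -
  obtain \<Sigma> where "is_Sigma \<nu> \<Sigma>"
    and max: "maxcones \<Sigma> = range (\<lambda>\<alpha>. {n \<in> MR \<nu>. w n \<in> SpR_chart \<mu> \<alpha>})"
    using strict_dual_pairD(4)[OF assms(1)] by blast
  then have \<Sigma>: "fan_of_PL \<nu> \<Sigma>"
    unfolding is_Sigma_def by simp
  obtain C where "C \<in> \<Sigma>" "n \<in> C"
    using fan_of_PL_covers[OF \<Sigma> assms(2)] .
  then obtain D where "D \<in> maxcones \<Sigma>" "n \<in> D"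
    using maxcones_cover[OF fan_of_PL_finite[OF \<Sigma>]] by blast
  with max that show ?thesis
    by auto
qed

lemma strict_dual_pair_Sp_linear_on_chart:
  assumes "strict_dual_pair F \<mu> \<nu> v w" "p \<in> Sp F \<mu>"
  obtains \<alpha> where "linear (\<lambda>x. p (chart_inv \<mu> \<alpha> x))"
proof -
  obtain n where n: "n \<in> Mpts F \<nu>" "p = w n"
    using bij_betw_imp_surj_on[OF strict_dual_pairD(3)[OF assms(1)]] assms(2) by blast
  then obtain \<alpha> where "w n \<in> SpR_chart \<mu> \<alpha>"
    using strict_dual_pair_linear_on_chart[OF assms(1)] unfolding Mpts_def by blast
  with n that show ?thesis
    unfolding SpR_chart_def by blast
qed

section \<open>Finite unions of polyhedra\<close>

lemma nonneg_combination_in_convex_cone_hull: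
  assumes "finite T" "T \<subseteq> S" "\<forall>u\<in>T. 0 \<le> c u"
  shows "(\<Sum>u\<in>T. c u *\<^sub>R u) \<in> convex_cone hull S"
  using assms
proof (induction T rule: finite_induct)
  case empty
  then show ?case by (simp add: convex_cone_hull_contains_0)
next
  case (insert u T)
  have "c u *\<^sub>R u \<in> convex_cone hull S"
    using insert.prems by (intro convex_cone_hull_mul hull_inc) auto
  moreover have "(\<Sum>u\<in>T. c u *\<^sub>R u) \<in> convex_cone hull S"
    using insert by auto
  ultimately show ?case
    using insert.hyps by (simp add: convex_cone_hull_add)
qed

lemma convex_cone_fincone: "convex_cone (fincone S)"
  unfolding convex_cone_iff
proof (intro conjI ballI allI impI)
  show "0 \<in> fincone S"
    unfolding fincone_def by (intro CollectI exI[of _ "\<lambda>u. 0"]) auto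
next
  fix x y assume "x \<in> fincone S" "y \<in> fincone S"
  then obtain c d where "\<forall>u\<in>S. 0 \<le> c u" "x = (\<Sum>u\<in>S. c u *\<^sub>R u)"
    and "\<forall>u\<in>S. 0 \<le> d u" "y = (\<Sum>u\<in>S. d u *\<^sub>R u)"
    unfolding fincone_def by auto
  then show "x + y \<in> fincone S"
    unfolding fincone_def
    by (intro CollectI exI[of _ "\<lambda>u. c u + d u"]) (auto simp: scaleR_add_left sum.distrib)
next
  fix x and k :: real assume "x \<in> fincone S" "0 \<le> k"
  then obtain c where "\<forall>u\<in>S. 0 \<le> c u" "x = (\<Sum>u\<in>S. c u *\<^sub>R u)"
    unfolding fincone_def by auto
  with \<open>0 \<le> k\<close> show "k *\<^sub>R x \<in> fincone S"
    unfolding fincone_def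
    by (intro CollectI exI[of _ "\<lambda>u. k * c u"]) (auto simp: scaleR_sum_right)
qed

lemma fincone_eq_convex_cone_hull:
  assumes "finite S"
  shows "fincone S = convex_cone hull S"
proof
  show "fincone S \<subseteq> convex_cone hull S"
    unfolding fincone_def using nonneg_combination_in_convex_cone_hull[OF assms subset_refl] by blast
  have "x \<in> fincone S" if "x \<in> S" for x
  proof -
    have "(\<Sum>u\<in>S. (if u = x then 1 else 0) *\<^sub>R u) = x"
      using assms that by (simp add: if_distrib[of "\<lambda>c. c *\<^sub>R _"] cong: if_cong)
    then show ?thesis
      unfolding fincone_def by (intro CollectI exI[of _ "\<lambda>u. if u = x then 1 else 0"]) auto
  qed
  then show "convex_cone hull S \<subseteq> fincone S"
    by (intro hull_minimal subsetI convex_cone_fincone)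
qed

lemma polyhedral_cone_F_imp_polyhedron: "polyhedral_cone_F F C \<Longrightarrow> polyhedron C"
  unfolding polyhedral_cone_F_def
  by (auto simp: fincone_eq_convex_cone_hull polyhedron_convex_cone_hull)

lemma polyhedron_linear_superlevel:
  fixes h :: "'a::euclidean_space \<Rightarrow> real"
  assumes "linear h"
  shows "polyhedron {x. a \<le> h x}"
proof -
  have "h x = adjoint h 1 \<bullet> x" for x
    using adjoint_clauses(2)[OF assms, of 1 x] by (simp add: inner_real_def)
  then have "{x. a \<le> h x} = {x. adjoint h 1 \<bullet> x \<ge> a}"
    by simp
  then show ?thesis
    by (simp add: polyhedron_halfspace_ge)
qed

definition polyhedral_union :: "'a::euclidean_space set \<Rightarrow> bool" where
  "polyhedral_union S \<longleftrightarrow> (\<exists>\<A>. finite \<A> \<and> (\<forall>A\<in>\<A>. polyhedron A) \<and> S = \<Union>\<A>)"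

lemma polyhedral_union_Int:
  assumes "polyhedral_union S" "polyhedral_union T"
  shows "polyhedral_union (S \<inter> T)"
proof -
  obtain \<A> \<B> where \<A>: "finite \<A>" "\<forall>A\<in>\<A>. polyhedron A" "S = \<Union>\<A>"
    and \<B>: "finite \<B>" "\<forall>B\<in>\<B>. polyhedron B" "T = \<Union>\<B>"
    using assms unfolding polyhedral_union_def by blast
  have "S \<inter> T = \<Union>((\<lambda>(A, B). A \<inter> B) ` (\<A> \<times> \<B>))"
    using \<A>(3) \<B>(3) by blast
  then show ?thesis
    unfolding polyhedral_union_def using \<A>(1,2) \<B>(1,2) by (intro exI[of _ "(\<lambda>(A, B). A \<inter> B) ` (\<A> \<times> \<B>)"]) auto
qed

lemma polyhedral_union_INT:
  assumes "finite I" "\<And>i. i \<in> I \<Longrightarrow> polyhedral_union (S i)"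
  shows "polyhedral_union (\<Inter>i\<in>I. S i)"
  using assms
proof (induction I rule: finite_induct)
  case empty
  show ?case
    unfolding polyhedral_union_def by (intro exI[of _ "{UNIV}"]) auto
next
  case (insert i I)
  then show ?case
    by (simp add: polyhedral_union_Int)
qed

lemma finite_extreme_points_polyhedral_union:
  assumes "polyhedral_union S"
  shows "finite {x. x extreme_point_of S}"
proof -
  obtain \<A> where \<A>: "finite \<A>" "\<forall>A\<in>\<A>. polyhedron A" "S = \<Union>\<A>"
    using assms unfolding polyhedral_union_def by blast
  have "{x. x extreme_point_of S} \<subseteq> (\<Union>A\<in>\<A>. {x. x extreme_point_of A})"
    using \<A>(3) unfolding extreme_point_of_def by blast
  moreover have "finite (\<Union>A\<in>\<A>. {x. x extreme_point_of A})"
    using \<A>(1,2) finite_polyhedron_extreme_points by blast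
  ultimately show ?thesis
    by (rule finite_subset)
qed

lemma polyhedral_union_PL_superlevel:
  fixes f :: "real^'n \<Rightarrow> real^'n" and g :: "real^'n \<Rightarrow> real"
  assumes "PL_F F f" "linear g"
  shows "polyhedral_union {x. a \<le> g (f x)}"
proof -
  obtain \<Sigma> where \<Sigma>: "complete_fan (polyhedral_cone_F F) \<Sigma>"
    and pieces: "\<forall>C\<in>\<Sigma>. \<exists>L. F_linear F L \<and> (\<forall>x\<in>C. f x = L x)"
    using assms(1) unfolding PL_F_def by blast
  obtain L where L: "\<forall>C\<in>\<Sigma>. F_linear F (L C) \<and> (\<forall>x\<in>C. f x = L C x)"
    using bchoice[OF pieces] by blast
  have "{x. a \<le> g (f x)} = (\<Union>C\<in>\<Sigma>. C \<inter> {x. a \<le> g (L C x)})"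
  proof (intro set_eqI iffI)
    fix x
    obtain C where "C \<in> \<Sigma>" "x \<in> C"
      using complete_fan_covers[OF \<Sigma>] by blast
    moreover assume "x \<in> {x. a \<le> g (f x)}"
    ultimately show "x \<in> (\<Union>C\<in>\<Sigma>. C \<inter> {x. a \<le> g (L C x)})"
      using L by auto
  next
    fix x assume "x \<in> (\<Union>C\<in>\<Sigma>. C \<inter> {x. a \<le> g (L C x)})"
    then show "x \<in> {x. a \<le> g (f x)}"
      using L by auto
  qed
  moreover have "polyhedron (C \<inter> {x. a \<le> g (L C x)})" if "C \<in> \<Sigma>" for C
  proof -
    have "linear (\<lambda>x. g (L C x))"
      using L that linear_compose[of "L C" g] assms(2) unfolding F_linear_def by (simp add: o_def)
    then have "polyhedron {x. a \<le> g (L C x)}"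
      by (rule polyhedron_linear_superlevel)
    then show ?thesis
      using polyhedral_cone_F_imp_polyhedron[OF complete_fan_cones[OF \<Sigma> that]] by simp
  qed
  ultimately show ?thesis
    using complete_fan_finite[OF \<Sigma>] unfolding polyhedral_union_def
    by (intro exI[of _ "(\<lambda>C. C \<inter> {x. a \<le> g (L C x)}) ` \<Sigma>"]) auto
qed

lemma polyhedral_union_Sp_superlevel:
  assumes "polyptych F \<mu>" "strict_dual_pair F \<mu> \<nu> v w" "p \<in> Sp F \<mu>"
  shows "polyhedral_union {x. a \<le> p (chart_inv \<mu> \<beta> x)}"
proof -
  obtain \<alpha> where "linear (\<lambda>x. p (chart_inv \<mu> \<alpha> x))"
    using strict_dual_pair_Sp_linear_on_chart[OF assms(2,3)] by blast
  moreover have "PL_F F (\<mu> \<beta> \<alpha>)"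
    using assms(1) unfolding polyptych_def by blast
  ultimately show ?thesis
    using polyhedral_union_PL_superlevel[of F "\<mu> \<beta> \<alpha>" "\<lambda>x. p (chart_inv \<mu> \<alpha> x)" a]
    by (simp add: chart_inv_mutation[OF assms(1)])
qed

lemma PL_polytope_subset_MR: "PL_polytope F \<mu> P \<Longrightarrow> P \<subseteq> MR \<mu>"
  unfolding PL_polytope_def by (elim conjE exE) simp

lemma PL_polytope_compact: "PL_polytope F \<mu> P \<Longrightarrow> compact ((\<lambda>m. m \<alpha>) ` P)"
  unfolding PL_polytope_def by (elim conjE) (erule allE)

lemma PL_polytope_chart_image:
  assumes "polyptych F \<mu>" "PL_polytope F \<mu> P"
  obtains pa where "\<forall>(p, a)\<in>set pa. p \<in> Sp F \<mu>"
    and "(\<lambda>m. m \<alpha>) ` P = (\<Inter>(p, a)\<in>set pa. {x. a \<le> p (chart_inv \<mu> \<alpha> x)})"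
proof -
  obtain pa where pa_F: "\<forall>(p, a)\<in>set pa. p \<in> Sp F \<mu> \<and> a \<in> F"
    and P: "P = MR \<mu> \<inter> (\<Inter>(p, a)\<in>set pa. halfspace \<mu> p a)"
    using assms(2) unfolding PL_polytope_def by (elim conjE exE) simp
  then have pa: "\<forall>(p, a)\<in>set pa. p \<in> Sp F \<mu>"
    by auto
  have "(\<lambda>m. m \<alpha>) ` P = (\<Inter>(p, a)\<in>set pa. {x. a \<le> p (chart_inv \<mu> \<alpha> x)})"
  proof
    show "(\<lambda>m. m \<alpha>) ` P \<subseteq> (\<Inter>(p, a)\<in>set pa. {x. a \<le> p (chart_inv \<mu> \<alpha> x)})"
      using P by (auto simp: halfspace_def chart_inv_coordinate)
    show "(\<Inter>(p, a)\<in>set pa. {x. a \<le> p (chart_inv \<mu> \<alpha> x)}) \<subseteq> (\<lambda>m. m \<alpha>) ` P"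
    proof
      fix x assume "x \<in> (\<Inter>(p, a)\<in>set pa. {x. a \<le> p (chart_inv \<mu> \<alpha> x)})"
      then have "chart_inv \<mu> \<alpha> x \<in> P"
        using P chart_inv_in_MR[OF assms(1)] by (auto simp: halfspace_def)
      then show "x \<in> (\<lambda>m. m \<alpha>) ` P"
        using chart_inv_apply[OF assms(1)] by (metis image_eqI)
    qed
  qed
  with pa show ?thesis
    by (rule that)
qed

lemma convex_PL_polytope_chart_image:
  assumes "polyptych F \<mu>" "PL_polytope F \<mu> P"
  shows "convex ((\<lambda>m. m \<alpha>) ` P)"
proof -
  obtain pa where pa: "\<forall>(p, a)\<in>set pa. p \<in> Sp F \<mu>"
    and P: "(\<lambda>m. m \<alpha>) ` P = (\<Inter>(p, a)\<in>set pa. {x. a \<le> p (chart_inv \<mu> \<alpha> x)})"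
    by (rule PL_polytope_chart_image[OF assms])
  have "convex (case q of (p, a) \<Rightarrow> {x. a \<le> p (chart_inv \<mu> \<alpha> x)})" if "q \<in> set pa" for q
  proof (cases q)
    case (Pair p a)
    then have "p \<in> SpR \<mu>"
      using pa that unfolding Sp_def by auto
    then have "concave_on UNIV (\<lambda>x. p (chart_inv \<mu> \<alpha> x))"
      by (rule SpR_chart_concave[OF assms(1)])
    from convex_superlevel_concave_on[OF this, of a] show ?thesis
      using Pair by simp
  qed
  then show ?thesis
    unfolding P by (rule convex_INT)
qed

lemma finite_extreme_points_PL_polytope_chart_image:
  assumes "polyptych F \<mu>" "strict_dual_pair F \<mu> \<nu> v w" "PL_polytope F \<mu> P"
  shows "finite {x. x extreme_point_of (\<lambda>m. m \<alpha>) ` P}"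
proof -
  obtain pa where pa: "\<forall>(p, a)\<in>set pa. p \<in> Sp F \<mu>"
    and P: "(\<lambda>m. m \<alpha>) ` P = (\<Inter>(p, a)\<in>set pa. {x. a \<le> p (chart_inv \<mu> \<alpha> x)})"
    by (rule PL_polytope_chart_image[OF assms(1,3)])
  have "polyhedral_union ((\<lambda>m. m \<alpha>) ` P)"
    unfolding P using pa polyhedral_union_Sp_superlevel[OF assms(1,2)]
    by (intro polyhedral_union_INT) auto
  then show ?thesis
    by (rule finite_extreme_points_polyhedral_union)
qed

lemma linear_attains_min_at_extreme_point:
  fixes g :: "'a::euclidean_space \<Rightarrow> real"
  assumes "linear g" "compact K" "convex K" "K \<noteq> {}" "finite {x. x extreme_point_of K}"
  obtains e where "e extreme_point_of K" "\<And>x. x \<in> K \<Longrightarrow> g e \<le> g x"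
proof -
  define E where "E = {x. x extreme_point_of K}"
  have K: "K = convex hull E"
    unfolding E_def using Krein_Milman_Minkowski[OF assms(2,3)] .
  have fin: "finite (g ` E)" and "g ` E \<noteq> {}"
    using assms(4,5) K unfolding E_def by auto
  then have "Min (g ` E) \<in> g ` E"
    by (rule Min_in)
  then obtain e where e: "e \<in> E" "g e = Min (g ` E)"
    by force
  have min: "g e \<le> g x" if "x \<in> E" for x
    using Min_le[OF fin imageI[OF that]] e(2) by simp
  have "convex {x. g e \<le> g x}"
    using polyhedron_imp_convex[OF polyhedron_linear_superlevel[OF assms(1)]] .
  then have "K \<subseteq> {x. g e \<le> g x}"
    unfolding K using min by (intro hull_minimal) auto
  with e(1) that show ?thesis
    unfolding E_def by blast
qed

section \<open>Vertices and the support function\<close>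

lemma chart_inv_extreme_point_in_vertices:
  assumes "polyptych F \<mu>" "e extreme_point_of (\<lambda>m. m \<alpha>) ` P"
  shows "chart_inv \<mu> \<alpha> e \<in> vertices \<mu> P"
  unfolding vertices_def
  using assms(2) chart_inv_in_MR[OF assms(1)] chart_inv_apply[OF assms(1)]
  by (intro CollectI conjI exI[of _ \<alpha>]) auto

lemma vertices_eq_chart_extreme_points:
  assumes "polyptych F \<mu>"
  shows "vertices \<mu> P = (\<Union>\<alpha>. chart_inv \<mu> \<alpha> ` {x. x extreme_point_of (\<lambda>m. m \<alpha>) ` P})"
proof (intro set_eqI iffI)
  fix m assume "m \<in> vertices \<mu> P"
  then obtain \<alpha> where "m \<in> MR \<mu>" "m \<alpha> extreme_point_of (\<lambda>u. u \<alpha>) ` P"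
    unfolding vertices_def by blast
  then show "m \<in> (\<Union>\<alpha>. chart_inv \<mu> \<alpha> ` {x. x extreme_point_of (\<lambda>m. m \<alpha>) ` P})"
    using chart_inv_coordinate[of m \<mu> \<alpha>] by (metis (mono_tags, lifting) UNIV_I UN_I image_eqI mem_Collect_eq)
next
  fix m assume "m \<in> (\<Union>\<alpha>. chart_inv \<mu> \<alpha> ` {x. x extreme_point_of (\<lambda>m. m \<alpha>) ` P})"
  then show "m \<in> vertices \<mu> P"
    using chart_inv_extreme_point_in_vertices[OF assms] by blast
qed

lemma vertices_subset:
  assumes "P \<subseteq> MR \<mu>"
  shows "vertices \<mu> P \<subseteq> P"
proof
  fix m assume "m \<in> vertices \<mu> P"
  then obtain \<alpha> where m: "m \<in> MR \<mu>" "m \<alpha> \<in> (\<lambda>u. u \<alpha>) ` P"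
    unfolding vertices_def extreme_point_of_def by blast
  obtain u where u: "u \<in> P" "m \<alpha> = u \<alpha>"
    using m(2) by (rule imageE)
  have "m = u"
    using inj_onD[OF inj_on_coordinate_MR u(2) m(1) subsetD[OF assms u(1)]] .
  with u(1) show "m \<in> P"
    by simp
qed

lemma finite_vertices:
  fixes \<mu> :: "'i::finite \<Rightarrow> 'i \<Rightarrow> real^'r \<Rightarrow> real^'r"
  assumes "polyptych F \<mu>" "strict_dual_pair F \<mu> \<nu> v w" "PL_polytope F \<mu> P"
  shows "finite (vertices \<mu> P)"
  unfolding vertices_eq_chart_extreme_points[OF assms(1)]
  using finite_extreme_points_PL_polytope_chart_image[OF assms] by simp

lemma support_fn_attained_at_vertex:
  assumes "polyptych F \<mu>" "strict_dual_pair F \<mu> \<nu> v w" "PL_polytope F \<mu> P" "P \<noteq> {}"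
    and "n \<in> MR \<nu>"
  obtains s where "s \<in> vertices \<mu> P" "\<And>u. u \<in> P \<Longrightarrow> v s n \<le> v u n"
proof -
  obtain \<alpha> where "w n \<in> SpR_chart \<mu> \<alpha>"
    using strict_dual_pair_linear_on_chart[OF assms(2,5)] by blast
  then have lin: "linear (\<lambda>x. w n (chart_inv \<mu> \<alpha> x))"
    unfolding SpR_chart_def by blast
  have PMR: "P \<subseteq> MR \<mu>"
    using PL_polytope_subset_MR[OF assms(3)] .
  have "(\<lambda>m. m \<alpha>) ` P \<noteq> {}"
    using assms(4) by simp
  then obtain e where e: "e extreme_point_of (\<lambda>m. m \<alpha>) ` P"
    and min: "\<And>x. x \<in> (\<lambda>m. m \<alpha>) ` P \<Longrightarrow> w n (chart_inv \<mu> \<alpha> e) \<le> w n (chart_inv \<mu> \<alpha> x)"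
    using linear_attains_min_at_extreme_point[OF lin PL_polytope_compact[OF assms(3)]
        convex_PL_polytope_chart_image[OF assms(1,3)] _
        finite_extreme_points_PL_polytope_chart_image[OF assms(1-3)]]
    by blast
  have v_eq_w: "v u n = w n u" if "u \<in> MR \<mu>" for u
    using strict_dual_pairD(2)[OF assms(2)] that assms(5) by blast
  show ?thesis
  proof (rule that)
    show "chart_inv \<mu> \<alpha> e \<in> vertices \<mu> P"
      using chart_inv_extreme_point_in_vertices[OF assms(1) e] .
    show "v (chart_inv \<mu> \<alpha> e) n \<le> v u n" if "u \<in> P" for u
    proof -
      have u: "u \<in> MR \<mu>"
        using PMR that by blast
      have "w n (chart_inv \<mu> \<alpha> e) \<le> w n u"
        using min[OF imageI[OF that]] chart_inv_coordinate[OF u] by simp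
      then show ?thesis
        using v_eq_w[OF u] v_eq_w[OF chart_inv_in_MR[OF assms(1)]] by simp
    qed
  qed
qed

lemma support_fn_eq_Min_vertices:
  assumes "polyptych F \<mu>" "strict_dual_pair F \<mu> \<nu> v w" "PL_polytope F \<mu> P" "P \<noteq> {}"
    and "n \<in> MR \<nu>"
    and "finite (vertices \<mu> P)"
  shows "support_fn v P n = Min ((\<lambda>s. v s n) ` vertices \<mu> P)"
proof -
  obtain s where s: "s \<in> vertices \<mu> P" "\<And>u. u \<in> P \<Longrightarrow> v s n \<le> v u n"
    using support_fn_attained_at_vertex[OF assms(1-5)] by blast
  have VP: "vertices \<mu> P \<subseteq> P"
    using vertices_subset[OF PL_polytope_subset_MR[OF assms(3)]] .
  have "support_fn v P n = v s n"
    unfolding support_fn_def using s VP by (intro cInf_eq_minimum) auto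
  also have "\<dots> = Min ((\<lambda>s. v s n) ` vertices \<mu> P)"
    using s VP assms(6) by (intro Min_eqI[symmetric]) auto
  finally show ?thesis .
qed

lemma continuous_on_Min_image:
  fixes h :: "'s \<Rightarrow> 'a::topological_space \<Rightarrow> real"
  assumes "finite V" "V \<noteq> {}" "\<And>s. s \<in> V \<Longrightarrow> continuous_on S (h s)"
  shows "continuous_on S (\<lambda>x. Min ((\<lambda>s. h s x) ` V))"
  using assms
proof (induction V rule: finite_ne_induct)
  case (insert s V)
  then show ?case
    by (simp add: continuous_on_min)
qed simp

lemma Psemi_Min_image:
  assumes "finite V" "V \<noteq> {}" "\<And>s. s \<in> V \<Longrightarrow> h s \<in> Psemi \<nu>"
  shows "(\<lambda>n. Min ((\<lambda>s. h s n) ` V)) \<in> Psemi \<nu>"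
  using assms
proof (induction V rule: finite_ne_induct)
  case (insert s V)
  then show ?case
    by (simp add: Psemi.min)
qed simp

theorem mainTheorem12:
  fixes F :: "real set"
    and \<mu> :: "'i::finite \<Rightarrow> 'i \<Rightarrow> real^'r \<Rightarrow> real^'r"
    and \<nu> :: "'j \<Rightarrow> 'j \<Rightarrow> real^'s \<Rightarrow> real^'s"
    and v :: "('i \<Rightarrow> real^'r) \<Rightarrow> ('j \<Rightarrow> real^'s) \<Rightarrow> real"
    and w :: "('j \<Rightarrow> real^'s) \<Rightarrow> ('i \<Rightarrow> real^'r) \<Rightarrow> real"
    and P :: "('i \<Rightarrow> real^'r) set"
  assumes "polyptych F \<mu>" and "polyptych F \<nu>"
    and "strict_dual_pair F \<mu> \<nu> v w"
    and "PL_polytope F \<mu> P" and "P \<noteq> {}"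
  shows "finite (vertices \<mu> P)
    \<and> (\<forall>n\<in>MR \<nu>. support_fn v P n = Min ((\<lambda>s. v s n) ` vertices \<mu> P))
    \<and> (\<forall>\<beta>. continuous_on UNIV (\<lambda>x. support_fn v P (chart_inv \<nu> \<beta> x)))
    \<and> (\<exists>g\<in>Psemi \<nu>. \<forall>n\<in>MR \<nu>. support_fn v P n = g n)"
proof -
  let ?\<psi> = "\<lambda>n. Min ((\<lambda>s. v s n) ` vertices \<mu> P)"
  have fin: "finite (vertices \<mu> P)"
    using finite_vertices[OF assms(1,3,4)] .
  have \<psi>: "\<forall>n\<in>MR \<nu>. support_fn v P n = ?\<psi> n"
    using support_fn_eq_Min_vertices[OF assms(1,3-5) _ fin] by blast
  have ne: "vertices \<mu> P \<noteq> {}"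
    using support_fn_attained_at_vertex[OF assms(1,3-5) chart_inv_in_MR[OF assms(2)]] by blast
  have points: "v s \<in> SpR \<nu>" if "s \<in> vertices \<mu> P" for s
    using that vertices_subset[OF PL_polytope_subset_MR[OF assms(4)]] PL_polytope_subset_MR[OF assms(4)]
      strict_dual_pairD(1)[OF assms(3)] by blast
  have cont: "continuous_on UNIV (\<lambda>x. support_fn v P (chart_inv \<nu> \<beta> x))" for \<beta>
  proof -
    have "continuous_on UNIV (\<lambda>x. ?\<psi> (chart_inv \<nu> \<beta> x))"
      by (intro continuous_on_Min_image[OF fin ne] SpR_chart_continuous[OF assms(2)] points)
    moreover have "support_fn v P (chart_inv \<nu> \<beta> x) = ?\<psi> (chart_inv \<nu> \<beta> x)" for x
      using \<psi> chart_inv_in_MR[OF assms(2)] by blast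
    ultimately show ?thesis
      by simp
  qed
  have "?\<psi> \<in> Psemi \<nu>"
    by (intro Psemi_Min_image[OF fin ne] Psemi.gen points)
  with \<psi> have "\<exists>g\<in>Psemi \<nu>. \<forall>n\<in>MR \<nu>. support_fn v P n = g n"
    by (intro bexI[of _ ?\<psi>])
  with fin \<psi> cont show ?thesis
    by blast
qed

end
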